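(* Let $p,q$ be coprime integers and let $G(p,q)=\langle a,b\mid a^2ba^2b^2a^{-1}b^2,\ m^pl^q\rangle$, where $m=a^{-1}b^{-2}$ and $l=ab^{-1}a^2m^{-18}$. Let $k\in G(p,q)$ be an element with $m=k^q$ and $l=k^{-p}$. Suppose $G(p,q)$ acts on the right on a partially ordered set $(P,\le)$, $x\mapsto x g$, preserving the order. If some $x\in P$ satisfies either (1) $xk=x$ and $x$, $xa$ are comparable in $P$, or (2) $xa=x$ and $x$, $xk$ are comparable in $P$, then $xg=x$ for every $g\in G(p,q)$.
   Context: $G(p,q)$ is the fundamental group of $p/q$-Dehn surgery on the $(-2,3,7)$-pretzel knot, with $m$, $l$ the meridian and longitude. An element $k$ with $m=k^q$, $l=k^{-p}$ exists in $G(p,q)$. In the relations one has $k^{p-18q}=a^{-2}ba^{-1}$. *)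

theory Defs
  imports "HOL-Algebra.Algebra" "HOL-Computational_Algebra.Primes"
begin

definition pm :: "('g, 'c) monoid_scheme \<Rightarrow> 'g \<Rightarrow> 'g \<Rightarrow> 'g" where
  "pm G a b = inv\<^bsub>G\<^esub> a \<otimes>\<^bsub>G\<^esub> (b [^]\<^bsub>G\<^esub> (-2::int))"

definition pl :: "('g, 'c) monoid_scheme \<Rightarrow> 'g \<Rightarrow> 'g \<Rightarrow> 'g" where
  "pl G a b = a \<otimes>\<^bsub>G\<^esub> inv\<^bsub>G\<^esub> b \<otimes>\<^bsub>G\<^esub> (a [^]\<^bsub>G\<^esub> (2::int))
      \<otimes>\<^bsub>G\<^esub> (pm G a b [^]\<^bsub>G\<^esub> (-18::int))"

definition Gpq_rels :: "('g, 'c) monoid_scheme \<Rightarrow> int \<Rightarrow> int \<Rightarrow> 'g \<Rightarrow> 'g \<Rightarrow> bool" where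
  "Gpq_rels G p q a b \<longleftrightarrow> a \<in> carrier G \<and> b \<in> carrier G \<and>
     (a [^]\<^bsub>G\<^esub> (2::int)) \<otimes>\<^bsub>G\<^esub> b \<otimes>\<^bsub>G\<^esub> (a [^]\<^bsub>G\<^esub> (2::int))
       \<otimes>\<^bsub>G\<^esub> (b [^]\<^bsub>G\<^esub> (2::int)) \<otimes>\<^bsub>G\<^esub> inv\<^bsub>G\<^esub> a
       \<otimes>\<^bsub>G\<^esub> (b [^]\<^bsub>G\<^esub> (2::int)) = \<one>\<^bsub>G\<^esub> \<and>
     (pm G a b [^]\<^bsub>G\<^esub> p) \<otimes>\<^bsub>G\<^esub> (pl G a b [^]\<^bsub>G\<^esub> q) = \<one>\<^bsub>G\<^esub>"

text \<open>Targets are quantified over groups on the countable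
  type nat, which suffices since the image of a two-generated group is countable.\<close>
definition is_Gpq :: "('g, 'c) monoid_scheme \<Rightarrow> int \<Rightarrow> int \<Rightarrow> 'g \<Rightarrow> 'g \<Rightarrow> bool" where
  "is_Gpq G p q a b \<longleftrightarrow> group G \<and> Gpq_rels G p q a b \<and> generate G {a, b} = carrier G \<and>
     (\<forall>(H :: nat monoid) h1 h2. group H \<and> Gpq_rels H p q h1 h2 \<longrightarrow>
        (\<exists>\<phi> \<in> hom G H. \<phi> a = h1 \<and> \<phi> b = h2))"

definition order_pres_right_action :: "('g, 'c) monoid_scheme \<Rightarrow> ('p::order \<Rightarrow> 'g \<Rightarrow> 'p) \<Rightarrow> bool" where
  "order_pres_right_action G act \<longleftrightarrow>
     (\<forall>x. act x \<one>\<^bsub>G\<^esub> = x) \<and>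
     (\<forall>x g h. g \<in> carrier G \<longrightarrow> h \<in> carrier G \<longrightarrow> act (act x g) h = act x (g \<otimes>\<^bsub>G\<^esub> h)) \<and>
     (\<forall>x y g. g \<in> carrier G \<longrightarrow> x \<le> y \<longrightarrow> act x g \<le> act y g)"

end

theory Submission
  imports Defs
begin

(* Put m = a^-1 b^-2 and v = a^-2 b a^-1, so that b = a^2 v a, m = k^q and v = k^(p-18q).
   If g moves x strictly up, then so does every product of elements moving x weakly up in which
   some factor moves x strictly up; in particular such a product is not 1.  In case (1), m and v
   fix x, and if x < xa the relation a^2 v a^3 v a^2 m = 1 is such a product.  In case (2), a fixes
   x, and if x < xk then, depending on the signs of q and p - 18q (not both zero since p, q are
   coprime), this relation or the relator a^4 v a^3 m^-1 a^-2 m^-1 a^-1 = 1 is such a product.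
   The remaining cases follow by reversing the order of P or replacing k by k^-1.  So x is fixed
   by a and k, hence by b, hence by all of G(p,q). *)

locale ordered_right_action = group G + ord: ordering le lt
  for G :: "('g, 'c) monoid_scheme" (structure)
    and le :: "'p \<Rightarrow> 'p \<Rightarrow> bool" (infix "\<preceq>" 50) and lt (infix "\<prec>" 50) +
  fixes act :: "'p \<Rightarrow> 'g \<Rightarrow> 'p"
  assumes act_one [simp]: "act y \<one> = y"
    and act_act: "g \<in> carrier G \<Longrightarrow> h \<in> carrier G \<Longrightarrow> act (act y g) h = act y (g \<otimes> h)"
    and act_mono: "g \<in> carrier G \<Longrightarrow> y \<preceq> z \<Longrightarrow> act y g \<preceq> act z g"
begin

abbreviation stab :: "'p \<Rightarrow> 'g set" where
  "stab x \<equiv> stabilizer G (\<lambda>g y. act y g) x"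

lemma act_act_inv [simp]: "g \<in> carrier G \<Longrightarrow> act (act y g) (inv g) = y"
  by (simp add: act_act)

lemma act_strict_mono: "g \<in> carrier G \<Longrightarrow> y \<prec> z \<Longrightarrow> act y g \<prec> act z g"
  by (metis act_act_inv act_mono ord.strict_iff_order)

lemma dual: "ordered_right_action G (\<lambda>y z. z \<preceq> y) (\<lambda>y z. z \<prec> y) act"
  by unfold_locales
    (auto simp: act_act act_mono ord.strict_iff_order intro: ord.refl ord.trans ord.antisym)

lemma subgroup_stab: "subgroup (stab x) G"
proof (rule subgroupI)
  fix g
  assume "g \<in> stab x"
  then show "inv g \<in> stab x"
    using act_act_inv[of g x] by (auto simp: stabilizer_def)
qed (auto simp: stabilizer_def act_act[symmetric])

lemma fixed_by_generators:
  assumes "generate G S = carrier G" "S \<subseteq> stab x" "g \<in> carrier G"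
  shows "act x g = x"
  using generate_subgroup_incl[OF assms(2) subgroup_stab] assms(1,3)
  by (auto simp: stabilizer_def)

definition pos_cone :: "'p \<Rightarrow> 'g set" where
  "pos_cone x = {g \<in> carrier G. x \<prec> act x g}"

definition nonneg_cone :: "'p \<Rightarrow> 'g set" where
  "nonneg_cone x = {g \<in> carrier G. x \<preceq> act x g}"

lemma one_notin_pos_cone: "\<one> \<notin> pos_cone x"
  by (simp add: pos_cone_def ord.irrefl)

lemma pos_cone_imp_nonneg_cone: "g \<in> pos_cone x \<Longrightarrow> g \<in> nonneg_cone x"
  by (simp add: pos_cone_def nonneg_cone_def ord.strict_implies_order)

lemma stab_subset_nonneg_cone: "stab x \<subseteq> nonneg_cone x"
  by (auto simp: stabilizer_def nonneg_cone_def ord.refl)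

lemma nonneg_cone_mult:
  "g \<in> nonneg_cone x \<Longrightarrow> h \<in> nonneg_cone x \<Longrightarrow> g \<otimes> h \<in> nonneg_cone x"
  unfolding nonneg_cone_def by (auto simp: act_act[symmetric] intro: ord.trans act_mono)

lemma pos_cone_mult_nonneg:
  "g \<in> pos_cone x \<Longrightarrow> h \<in> nonneg_cone x \<Longrightarrow> g \<otimes> h \<in> pos_cone x"
  unfolding pos_cone_def nonneg_cone_def
  by (auto simp: act_act[symmetric] intro: ord.strict_trans1 act_strict_mono)

lemma nonneg_cone_mult_pos:
  "g \<in> nonneg_cone x \<Longrightarrow> h \<in> pos_cone x \<Longrightarrow> g \<otimes> h \<in> pos_cone x"
  unfolding pos_cone_def nonneg_cone_def
  by (auto simp: act_act[symmetric] intro: ord.strict_trans2 act_mono)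

lemma nonneg_cone_nat_pow: "g \<in> nonneg_cone x \<Longrightarrow> g [^] (n::nat) \<in> nonneg_cone x"
proof (induction n)
  case 0
  then show ?case by (simp add: nonneg_cone_def ord.refl)
next
  case (Suc n)
  then show ?case by (simp add: nonneg_cone_mult)
qed

lemma pos_cone_nat_pow: "g \<in> pos_cone x \<Longrightarrow> 0 < n \<Longrightarrow> g [^] (n::nat) \<in> pos_cone x"
proof (induction n)
  case (Suc n)
  then have "g [^] n \<in> nonneg_cone x" "g \<in> nonneg_cone x"
    using pos_cone_imp_nonneg_cone nonneg_cone_nat_pow by blast+
  then show ?case using Suc
    by (cases "n = 0") (auto simp: pos_cone_mult_nonneg nonneg_cone_mult_pos)
qed simp

lemma nonneg_cone_int_pow: "g \<in> nonneg_cone x \<Longrightarrow> 0 \<le> n \<Longrightarrow> g [^] (n::int) \<in> nonneg_cone x"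
  by (metis nonneg_cone_nat_pow pow_nat)

lemma pos_cone_int_pow: "g \<in> pos_cone x \<Longrightarrow> 0 < n \<Longrightarrow> g [^] (n::int) \<in> pos_cone x"
  by (metis pos_cone_nat_pow pow_nat zero_less_nat_eq order_less_imp_le)

lemma nonneg_cone_foldr: "set gs \<subseteq> nonneg_cone x \<Longrightarrow> foldr (\<otimes>) gs \<one> \<in> nonneg_cone x"
proof (induction gs)
  case Nil
  then show ?case by (simp add: nonneg_cone_def ord.refl)
next
  case (Cons g gs)
  then show ?case by (simp add: nonneg_cone_mult)
qed

lemma pos_cone_foldr:
  "set gs \<subseteq> nonneg_cone x \<Longrightarrow> set gs \<inter> pos_cone x \<noteq> {} \<Longrightarrow> foldr (\<otimes>) gs \<one> \<in> pos_cone x"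
proof (induction gs)
  case (Cons g gs)
  then show ?case
    by (cases "g \<in> pos_cone x") (auto simp: pos_cone_mult_nonneg nonneg_cone_mult_pos nonneg_cone_foldr)
qed simp

end

lemma order_pres_right_action_imp_ordered_right_action:
  assumes "group G" "order_pres_right_action G act"
  shows "ordered_right_action G (\<le>) (<) act"
  using assms unfolding order_pres_right_action_def
  by (intro ordered_right_action.intro order.ordering_axioms ordered_right_action_axioms.intro) auto

(* The first relation only restates m = a^-1 b^-2 with b = a^2 v a; the second is the relator
   a^2 b a^2 b^2 a^-1 b^2 of G(p,q). *)
definition amv_rels :: "('g, 'c) monoid_scheme \<Rightarrow> 'g \<Rightarrow> 'g \<Rightarrow> 'g \<Rightarrow> bool" where
  "amv_rels G a m v \<longleftrightarrow>
     foldr (monoid.mult G) [a [^]\<^bsub>G\<^esub> (2::nat), v, a [^]\<^bsub>G\<^esub> (3::nat), v, a [^]\<^bsub>G\<^esub> (2::nat), m] \<one>\<^bsub>G\<^esub>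
       = \<one>\<^bsub>G\<^esub> \<and>
     foldr (monoid.mult G) [a [^]\<^bsub>G\<^esub> (4::nat), v, a [^]\<^bsub>G\<^esub> (3::nat), inv\<^bsub>G\<^esub> m,
         inv\<^bsub>G\<^esub> (a [^]\<^bsub>G\<^esub> (2::nat)), inv\<^bsub>G\<^esub> m, inv\<^bsub>G\<^esub> a] \<one>\<^bsub>G\<^esub>
       = \<one>\<^bsub>G\<^esub>"

lemma (in group) int_pow_two: "g \<in> carrier G \<Longrightarrow> g [^] (2::int) = g \<otimes> g"
  using int_pow_int[of G g 2] by (simp add: numeral_eq_Suc)

lemma (in group) mult_inv_cancel_left [simp]:
  "g \<in> carrier G \<Longrightarrow> h \<in> carrier G \<Longrightarrow> g \<otimes> (inv g \<otimes> h) = h"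
  by (simp add: m_assoc[symmetric])

lemma (in group) inv_mult_cancel_left [simp]:
  "g \<in> carrier G \<Longrightarrow> h \<in> carrier G \<Longrightarrow> inv g \<otimes> (g \<otimes> h) = h"
  by (simp add: m_assoc[symmetric])

lemma (in group) Gpq_rels_imp_amv_rels:
  assumes "Gpq_rels G p q a b"
  shows "amv_rels G a (pm G a b) (inv (a [^] (2::nat)) \<otimes> b \<otimes> inv a)"
proof -
  have a: "a \<in> carrier G" and b: "b \<in> carrier G"
    using assms by (auto simp: Gpq_rels_def)
  show ?thesis
    using assms a b
    by (simp add: amv_rels_def Gpq_rels_def pm_def int_pow_two int_pow_neg numeral_eq_Suc
        m_assoc inv_mult_group)
qed

lemma (in group) pow_p_minus_18q_eq:
  fixes p q :: int
  assumes a: "a \<in> carrier G" and b: "b \<in> carrier G" and k: "k \<in> carrier G"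
    and m: "k [^] q = pm G a b" and l: "k [^] (-p) = pl G a b"
  shows "k [^] (p - 18 * q) = inv (a [^] (2::nat)) \<otimes> b \<otimes> inv a"
proof -
  define w where "w = a \<otimes> inv b \<otimes> a [^] (2::nat)"
  have w: "w \<in> carrier G" using a b by (simp add: w_def)
  have "k [^] (-p) = w \<otimes> k [^] (q * -18)"
    using l a by (simp add: pl_def m[symmetric] w_def int_pow_pow[OF k] int_pow_two numeral_eq_Suc)
  then have "w = k [^] (-p) \<otimes> inv (k [^] (q * -18))"
    using w k by (simp add: m_assoc)
  also have "\<dots> = k [^] (-p - q * -18)"
    by (rule int_pow_diff[OF k, symmetric])
  also have "\<dots> = k [^] (18 * q - p)"
    by (rule arg_cong[where f = "\<lambda>n. k [^] n"]) simp
  finally have "w = k [^] (18 * q - p)" .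
  then have "inv w = k [^] (p - 18 * q)"
    using k by (simp add: int_pow_neg[symmetric])
  then show ?thesis
    using a b by (simp add: w_def inv_mult_group m_assoc)
qed

context ordered_right_action
begin

lemma amv_rels_not_raising_a:
  assumes rels: "amv_rels G a m v" and a: "a \<in> carrier G" and mv: "m \<in> stab x" "v \<in> stab x"
  shows "\<not> x \<prec> act x a"
proof
  assume "x \<prec> act x a"
  then have "a \<in> pos_cone x" using a by (simp add: pos_cone_def)
  then have "a [^] (2::nat) \<in> pos_cone x" "a [^] (3::nat) \<in> pos_cone x"
    by (simp_all add: pos_cone_nat_pow)
  moreover have "m \<in> nonneg_cone x" "v \<in> nonneg_cone x"
    using mv stab_subset_nonneg_cone by blast+
  ultimately have "foldr (\<otimes>) [a [^] (2::nat), v, a [^] (3::nat), v, a [^] (2::nat), m] \<one> \<in> pos_cone x"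
    by (intro pos_cone_foldr) (auto simp: pos_cone_imp_nonneg_cone)
  with rels one_notin_pos_cone show False by (simp add: amv_rels_def)
qed

lemma amv_rels_a_in_stab:
  assumes "amv_rels G a m v" "a \<in> carrier G" "m \<in> stab x" "v \<in> stab x"
    and "x \<preceq> act x a \<or> act x a \<preceq> x"
  shows "a \<in> stab x"
proof -
  have "act x a = x"
  proof (rule ccontr)
    assume "act x a \<noteq> x"
    with assms(5) have "x \<prec> act x a \<or> act x a \<prec> x"
      by (auto simp: ord.strict_iff_order)
    then show False
      using amv_rels_not_raising_a[OF assms(1-4)]
        ordered_right_action.amv_rels_not_raising_a[OF dual assms(1-4)] by blast
  qed
  with assms(2) show ?thesis by (simp add: stabilizer_def)
qed

lemma amv_rels_not_raising_base_nonneg: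
  fixes q s :: int
  assumes rels: "amv_rels G a (c [^] q) (c [^] s)" and a: "a \<in> stab x" and c: "c \<in> carrier G"
    and s: "0 \<le> s" and sq: "s \<noteq> 0 \<or> q \<noteq> 0"
  shows "\<not> x \<prec> act x c"
proof
  assume "x \<prec> act x c"
  then have c_pos: "c \<in> pos_cone x" using c by (simp add: pos_cone_def)
  have a_pow: "a [^] n \<in> nonneg_cone x" "inv (a [^] n) \<in> nonneg_cone x" for n :: nat
    using subgroup_int_pow_closed[OF subgroup_stab a, of "int n"] stab_subset_nonneg_cone
      subgroup.m_inv_closed[OF subgroup_stab]
    by (auto simp: int_pow_int)
  have inv_a: "inv a \<in> nonneg_cone x"
    using a_pow(2)[of 1] a by (simp add: stabilizer_def)
  have c_pow: "c [^] n \<in> nonneg_cone x" if "0 \<le> n" for n :: int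
    using c_pos that by (simp add: pos_cone_imp_nonneg_cone nonneg_cone_int_pow)
  have c_pow_pos: "c [^] n \<in> pos_cone x" if "0 < n" for n :: int
    using c_pos that by (rule pos_cone_int_pow)
  show False
  proof (cases "0 \<le> q")
    case True
    with s sq have "c [^] s \<in> pos_cone x \<or> c [^] q \<in> pos_cone x"
      using c_pow_pos by force
    then have "foldr (\<otimes>) [a [^] (2::nat), c [^] s, a [^] (3::nat), c [^] s, a [^] (2::nat), c [^] q] \<one>
        \<in> pos_cone x"
      using True s a_pow c_pow by (intro pos_cone_foldr) auto
    with rels one_notin_pos_cone show False by (simp add: amv_rels_def)
  next
    case False
    then have "inv (c [^] q) \<in> pos_cone x"
      using c_pow_pos[of "-q"] c by (simp add: int_pow_neg)
    then have "foldr (\<otimes>) [a [^] (4::nat), c [^] s, a [^] (3::nat), inv (c [^] q),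
        inv (a [^] (2::nat)), inv (c [^] q), inv a] \<one> \<in> pos_cone x"
      using s a_pow c_pow inv_a by (intro pos_cone_foldr) (auto simp: pos_cone_imp_nonneg_cone)
    with rels one_notin_pos_cone show False by (simp add: amv_rels_def)
  qed
qed

lemma amv_rels_not_raising_base:
  fixes q s :: int
  assumes rels: "amv_rels G a (c [^] q) (c [^] s)" and a: "a \<in> stab x" and c: "c \<in> carrier G"
    and sq: "s \<noteq> 0 \<or> q \<noteq> 0"
  shows "\<not> x \<prec> act x c"
proof (cases "0 \<le> s")
  case True
  then show ?thesis by (rule amv_rels_not_raising_base_nonneg[OF rels a c _ sq])
next
  case False
  have "c [^] n = inv c [^] (- n)" for n :: int
    using c by (simp add: int_pow_inv int_pow_neg)
  with rels have "amv_rels G a (inv c [^] (- q)) (inv c [^] (- s))"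
    by simp
  \<comment> \<open>the case 0 \<le> s for inv c and the reversed order\<close>
  from ordered_right_action.amv_rels_not_raising_base_nonneg[OF dual this a] False c sq
  have "\<not> act x (inv c) \<prec> x" by simp
  then show ?thesis
    using act_strict_mono[of "inv c" x "act x c"] c by auto
qed

lemma amv_rels_base_in_stab:
  fixes q s :: int
  assumes "amv_rels G a (c [^] q) (c [^] s)" "a \<in> stab x" "c \<in> carrier G" "s \<noteq> 0 \<or> q \<noteq> 0"
    and "x \<preceq> act x c \<or> act x c \<preceq> x"
  shows "c \<in> stab x"
proof -
  have "act x c = x"
  proof (rule ccontr)
    assume "act x c \<noteq> x"
    with assms(5) have "x \<prec> act x c \<or> act x c \<prec> x"
      by (auto simp: ord.strict_iff_order)
    then show False
      using amv_rels_not_raising_base[OF assms(1-4)]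
        ordered_right_action.amv_rels_not_raising_base[OF dual assms(1-4)] by blast
  qed
  with assms(3) show ?thesis by (simp add: stabilizer_def)
qed

lemma amv_rels_a_and_base_in_stab:
  fixes q s :: int
  assumes rels: "amv_rels G a (c [^] q) (c [^] s)" and a: "a \<in> carrier G" and c: "c \<in> carrier G"
    and sq: "s \<noteq> 0 \<or> q \<noteq> 0"
    and x: "(act x c = x \<and> (x \<preceq> act x a \<or> act x a \<preceq> x)) \<or>
      (act x a = x \<and> (x \<preceq> act x c \<or> act x c \<preceq> x))"
  shows "a \<in> stab x" "c \<in> stab x"
proof -
  show c_stab: "c \<in> stab x"
  proof (cases "act x c = x")
    case True
    with c show ?thesis by (simp add: stabilizer_def)
  next
    case False
    with x a have "a \<in> stab x" "x \<preceq> act x c \<or> act x c \<preceq> x"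
      by (auto simp: stabilizer_def)
    then show ?thesis by (rule amv_rels_base_in_stab[OF rels _ c sq])
  qed
  show "a \<in> stab x"
  proof (cases "act x a = x")
    case True
    with a show ?thesis by (simp add: stabilizer_def)
  next
    case False
    with x have "x \<preceq> act x a \<or> act x a \<preceq> x" by auto
    then show ?thesis
      using amv_rels_a_in_stab[OF rels a] subgroup_int_pow_closed[OF subgroup_stab c_stab] by blast
  qed
qed

lemma fixed_by_a_and_v:
  assumes gen: "generate G {a, b} = carrier G" and b: "b \<in> carrier G"
    and a: "a \<in> stab x" and v: "inv (a [^] (2::nat)) \<otimes> b \<otimes> inv a \<in> stab x"
    and g: "g \<in> carrier G"
  shows "act x g = x"
proof -
  have a_carr: "a \<in> carrier G" using a by (simp add: stabilizer_def)
  then have "b = a \<otimes> a \<otimes> (inv (a [^] (2::nat)) \<otimes> b \<otimes> inv a) \<otimes> a"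
    using b by (simp add: m_assoc numeral_eq_Suc inv_mult_group)
  then have "b \<in> stab x"
    using a v by (metis subgroup.m_closed[OF subgroup_stab])
  with gen a g show ?thesis by (auto intro: fixed_by_generators)
qed

end

theorem mainTheorem7:
  fixes G :: "'g monoid" and p q :: int and a b k :: 'g
    and act :: "'p::order \<Rightarrow> 'g \<Rightarrow> 'p" and x :: 'p
  assumes "coprime p q"
    and "is_Gpq G p q a b"
    and "k \<in> carrier G"
    and "k [^]\<^bsub>G\<^esub> q = pm G a b"
    and "k [^]\<^bsub>G\<^esub> (-p) = pl G a b"
    and "order_pres_right_action G act"
    and "(act x k = x \<and> (x \<le> act x a \<or> act x a \<le> x)) \<or>
         (act x a = x \<and> (x \<le> act x k \<or> act x k \<le> x))"
  shows "\<forall>g \<in> carrier G. act x g = x"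
proof -
  have grp: "group G" and rels: "Gpq_rels G p q a b" and gen: "generate G {a, b} = carrier G"
    using assms(2) by (auto simp: is_Gpq_def)
  interpret ordered_right_action G "(\<le>)" "(<)" act
    using grp assms(6) by (rule order_pres_right_action_imp_ordered_right_action)
  have a: "a \<in> carrier G" and b: "b \<in> carrier G"
    using rels by (auto simp: Gpq_rels_def)
  note v = pow_p_minus_18q_eq[OF a b assms(3-5)]
  have "amv_rels G a (k [^]\<^bsub>G\<^esub> q) (k [^]\<^bsub>G\<^esub> (p - 18 * q))"
    using Gpq_rels_imp_amv_rels[OF rels] assms(4) v by simp
  moreover have "p - 18 * q \<noteq> 0 \<or> q \<noteq> 0"
    using assms(1) by auto
  ultimately have "a \<in> stab x" "k \<in> stab x"
    using amv_rels_a_and_base_in_stab[OF _ a assms(3) _ assms(7)] by auto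
  then show ?thesis
    using fixed_by_a_and_v[OF gen b] subgroup_int_pow_closed[OF subgroup_stab] v by metis
qed

end
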